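(* Let $\tilde{\mathbf{x}}=(x_s)\in(\mathbb{C}^* )^L$ satisfy the K-hexahedron equations. (a) For each $i\in\mathbb{Z}$ let $\alpha_i,\beta_i,\gamma_i\in\{-1,1\}$, and define $\tilde{\mathbf{y}}=(y_s)\in(\mathbb{C}^* )^L$ by $y_{(a,b,c)}=x_{(a,b,c)}$, $y_{(a,b+\frac12,c+\frac12)}=\beta_b\gamma_c\,x_{(a,b+\frac12,c+\frac12)}$, $y_{(a+\frac12,b,c+\frac12)}=\alpha_a\gamma_c\,x_{(a+\frac12,b,c+\frac12)}$, $y_{(a+\frac12,b+\frac12,c)}=\alpha_a\beta_b\,x_{(a+\frac12,b+\frac12,c)}$ for all $(a,b,c)\in\mathbb{Z}^3$. Then $\tilde{\mathbf{y}}$ satisfies the K-hexahedron equations. (b) Conversely, if $\tilde{\mathbf{y}}=(y_s)\in(\mathbb{C}^* )^L$ satisfies the K-hexahedron equations and $y_s=x_s$ for all $s\in\mathbb{Z}^3$, then there exist signs $\alpha_i,\beta_i,\gamma_i\in\{-1,1\}$, $i\in\mathbb{Z}$, such that $\tilde{\mathbf{y}}$ is given by the formulas in (a) for all $(a,b,c)\in\mathbb{Z}^3$.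
   Context: $L=\{(i,j,k)\in\mathbb{R}^3: 2i,2j,2k,i+j+k\in\mathbb{Z}\}$, i.e. $\mathbb{Z}^3$ together with the centers of unit squares with vertices in $\mathbb{Z}^3$. An array $\tilde{\mathbf{x}}=(x_s)\in\mathbb{C}^L$ with $x_s\ne0$ for $s\in\mathbb{Z}^3$ satisfies the K-hexahedron equations if (i) for every $s\in L\setminus\mathbb{Z}^3$, $x_s^2=x_{v_1}x_{v_3}+x_{v_2}x_{v_4}$, where $v_1,v_2,v_3,v_4$ are the vertices in cyclic order of the unit square centered at $s$; and (ii) for every $v\in\mathbb{Z}^3$, writing $z_{ijk}=x_{v+(i,j,k)}$: $z_{1\frac12\frac12}=(z_{\frac120\frac12}z_{\frac12\frac120}+z_{0\frac12\frac12}z_{100})/z_{000}$, $z_{\frac121\frac12}=(z_{0\frac12\frac12}z_{\frac12\frac120}+z_{\frac120\frac12}z_{010})/z_{000}$, $z_{\frac12\frac121}=(z_{0\frac12\frac12}z_{\frac120\frac12}+z_{\frac12\frac120}z_{001})/z_{000}$, $z_{111}=(A+2z_{0\frac12\frac12}z_{\frac120\frac12}z_{\frac12\frac120})/z_{000}^2$ with $A=2z_{100}z_{010}z_{001}+z_{000}(z_{100}z_{011}+z_{010}z_{101}+z_{001}z_{110})$. *)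

theory Defs
  imports Complex_Main
begin

text \<open>Points of L are encoded by doubled coordinates: (p,q,r) :: int^3 stands for
  (p/2,q/2,r/2). Thus L corresponds to {(p,q,r). even (p+q+r)}, Z^3 to the all-even
  triples, and face centres to triples with exactly two odd coordinates.
  An array indexed by L is a function int*int*int => complex whose values off L are irrelevant.\<close>

definition inL :: "int \<times> int \<times> int \<Rightarrow> bool" where
  "inL s = (case s of (p, q, r) \<Rightarrow> even (p + q + r))"

definition Khex :: "(int \<times> int \<times> int \<Rightarrow> complex) \<Rightarrow> bool" where
  "Khex x \<longleftrightarrow>
     (\<forall>a b c. x (2*a, 2*b, 2*c) \<noteq> 0) \<and>
     (\<forall>a b c. (x (2*a, 2*b+1, 2*c+1))^2 =
                 x (2*a, 2*b, 2*c) * x (2*a, 2*b+2, 2*c+2) + x (2*a, 2*b+2, 2*c) * x (2*a, 2*b, 2*c+2)) \<and>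
     (\<forall>a b c. (x (2*a+1, 2*b, 2*c+1))^2 =
                 x (2*a, 2*b, 2*c) * x (2*a+2, 2*b, 2*c+2) + x (2*a+2, 2*b, 2*c) * x (2*a, 2*b, 2*c+2)) \<and>
     (\<forall>a b c. (x (2*a+1, 2*b+1, 2*c))^2 =
                 x (2*a, 2*b, 2*c) * x (2*a+2, 2*b+2, 2*c) + x (2*a+2, 2*b, 2*c) * x (2*a, 2*b+2, 2*c)) \<and>
     (\<forall>a b c. let z = (\<lambda>i j k. x (2*a+i, 2*b+j, 2*c+k)) in
        z 2 1 1 = (z 1 0 1 * z 1 1 0 + z 0 1 1 * z 2 0 0) / z 0 0 0 \<and>
        z 1 2 1 = (z 0 1 1 * z 1 1 0 + z 1 0 1 * z 0 2 0) / z 0 0 0 \<and>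
        z 1 1 2 = (z 0 1 1 * z 1 0 1 + z 1 1 0 * z 0 0 2) / z 0 0 0 \<and>
        z 2 2 2 = (2 * z 2 0 0 * z 0 2 0 * z 0 0 2
                    + z 0 0 0 * (z 2 0 0 * z 0 2 2 + z 0 2 0 * z 2 0 2 + z 0 0 2 * z 2 2 0)
                    + 2 * z 0 1 1 * z 1 0 1 * z 1 1 0) / (z 0 0 0)^2)"

definition sign_twist ::
  "(int \<times> int \<times> int \<Rightarrow> complex) \<Rightarrow> (int \<times> int \<times> int \<Rightarrow> complex) \<Rightarrow>
   (int \<Rightarrow> complex) \<Rightarrow> (int \<Rightarrow> complex) \<Rightarrow> (int \<Rightarrow> complex) \<Rightarrow> bool" where
  "sign_twist x y \<alpha> \<beta> \<gamma> \<longleftrightarrow>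
     (\<forall>a b c.
        y (2*a, 2*b, 2*c) = x (2*a, 2*b, 2*c) \<and>
        y (2*a, 2*b+1, 2*c+1) = \<beta> b * \<gamma> c * x (2*a, 2*b+1, 2*c+1) \<and>
        y (2*a+1, 2*b, 2*c+1) = \<alpha> a * \<gamma> c * x (2*a+1, 2*b, 2*c+1) \<and>
        y (2*a+1, 2*b+1, 2*c) = \<alpha> a * \<beta> b * x (2*a+1, 2*b+1, 2*c))"

end

(* (a) On the unit cube with corner (a, b, c) the twist multiplies the three families of face
   values by beta_b gamma_c, alpha_a gamma_c and alpha_a beta_b, and every K-hexahedron equation
   is homogeneous of even degree in each of alpha_a, beta_b, gamma_c.
   (b) The face equations determine the face values from the vertex values up to sign, so the
   ratio rho = y / x is +-1 on faces.  With P = z_{1/2 0 1/2} z_{1/2 1/2 0} and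
   Q = z_{0 1/2 1/2} z_{100}, the cube equation for z_{1 1/2 1/2} turns into
   rho' (P + Q) = rho_2 rho_3 P + rho_1 Q, and P, Q, P + Q nonzero force rho' = rho_1 = rho_2 rho_3.
   So rho on a face is invariant under translation normal to the face, and
   rho_1(b, c) = rho_2(a, c) rho_3(a, b), which splits into one-variable signs. *)

theory Submission
  imports Defs "HOL-Library.Periodic_Fun"
begin

text \<open>\<^term>\<open>z i j k\<close> is the value at the corner plus \<open>(i/2, j/2, k/2)\<close>.\<close>

definition Khex_cube :: "(int \<Rightarrow> int \<Rightarrow> int \<Rightarrow> 'a::field) \<Rightarrow> bool" where
  "Khex_cube z \<longleftrightarrow>
     z 0 0 0 \<noteq> 0 \<and>
     (z 0 1 1)^2 = z 0 0 0 * z 0 2 2 + z 0 2 0 * z 0 0 2 \<and>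
     (z 1 0 1)^2 = z 0 0 0 * z 2 0 2 + z 2 0 0 * z 0 0 2 \<and>
     (z 1 1 0)^2 = z 0 0 0 * z 2 2 0 + z 2 0 0 * z 0 2 0 \<and>
     z 2 1 1 = (z 1 0 1 * z 1 1 0 + z 0 1 1 * z 2 0 0) / z 0 0 0 \<and>
     z 1 2 1 = (z 0 1 1 * z 1 1 0 + z 1 0 1 * z 0 2 0) / z 0 0 0 \<and>
     z 1 1 2 = (z 0 1 1 * z 1 0 1 + z 1 1 0 * z 0 0 2) / z 0 0 0 \<and>
     z 2 2 2 = (2 * z 2 0 0 * z 0 2 0 * z 0 0 2
                + z 0 0 0 * (z 2 0 0 * z 0 2 2 + z 0 2 0 * z 2 0 2 + z 0 0 2 * z 2 2 0)
                + 2 * z 0 1 1 * z 1 0 1 * z 1 1 0) / (z 0 0 0)^2"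

lemma Khex_iff_Khex_cube:
  "Khex x \<longleftrightarrow> (\<forall>a b c. Khex_cube (\<lambda>i j k. x (2*a + i, 2*b + j, 2*c + k)))"
  unfolding Khex_def Khex_cube_def Let_def by auto

lemma Khex_cube_rotate: "Khex_cube z \<Longrightarrow> Khex_cube (\<lambda>i j k. z j k i)"
  unfolding Khex_cube_def by (simp add: ac_simps)

fun rot3 :: "'a \<times> 'a \<times> 'a \<Rightarrow> 'a \<times> 'a \<times> 'a" where
  "rot3 (p, q, r) = (q, r, p)"

lemma inL_rot3 [simp]: "inL (rot3 s) = inL s"
  by (cases s) (auto simp: inL_def)

lemma Khex_rot3:
  assumes "Khex x"
  shows "Khex (x \<circ> rot3)"
  unfolding Khex_iff_Khex_cube
proof (intro allI)
  fix a b c :: int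
  have "Khex_cube (\<lambda>i j k. x (2*b + i, 2*c + j, 2*a + k))"
    using assms by (simp add: Khex_iff_Khex_cube)
  then show "Khex_cube (\<lambda>i j k. (x \<circ> rot3) (2*a + i, 2*b + j, 2*c + k))"
    by (simp add: Khex_cube_rotate)
qed

definition coord_sign :: "(int \<Rightarrow> 'a) \<Rightarrow> int \<Rightarrow> 'a::one" where
  "coord_sign \<alpha> p = (if odd p then \<alpha> (p div 2) else 1)"

lemma sign_twist_coord_sign:
  assumes twist: "sign_twist x y \<alpha> \<beta> \<gamma>" and "even (p + q + r)"
  shows "y (p, q, r) = coord_sign \<alpha> p * coord_sign \<beta> q * coord_sign \<gamma> r * x (p, q, r)"
proof -
  consider "even p" "even q" "even r" | "even p" "odd q" "odd r" | "odd p" "even q" "odd r"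
    | "odd p" "odd q" "even r"
    using assms(2) by auto
  then show ?thesis
    by cases (use twist in \<open>elim evenE oddE; simp add: sign_twist_def coord_sign_def\<close>)+
qed

lemma coord_sign_cube: "i \<in> {0, 1, 2} \<Longrightarrow> coord_sign \<alpha> (2*a + i) = coord_sign (\<lambda>_. \<alpha> a) i"
  by (auto simp: coord_sign_def)

text \<open>Every equation is homogeneous of even degree in each of \<open>A\<close>, \<open>B\<close>, \<open>C\<close>.\<close>

lemma Khex_cube_sign_twist:
  fixes z z' :: "int \<Rightarrow> int \<Rightarrow> int \<Rightarrow> 'a::field"
  assumes "Khex_cube z" and "A \<in> {-1, 1}" "B \<in> {-1, 1}" "C \<in> {-1, 1}"
    and "\<And>i j k. i \<in> {0, 1, 2} \<Longrightarrow> j \<in> {0, 1, 2} \<Longrightarrow> k \<in> {0, 1, 2} \<Longrightarrow> even (i + j + k) \<Longrightarrow>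
        z' i j k = coord_sign (\<lambda>_. A) i * coord_sign (\<lambda>_. B) j * coord_sign (\<lambda>_. C) k * z i j k"
  shows "Khex_cube z'"
proof -
  have "z' 0 0 0 = z 0 0 0" "z' 2 0 0 = z 2 0 0" "z' 0 2 0 = z 0 2 0" "z' 0 0 2 = z 0 0 2"
    "z' 0 2 2 = z 0 2 2" "z' 2 0 2 = z 2 0 2" "z' 2 2 0 = z 2 2 0" "z' 2 2 2 = z 2 2 2"
    "z' 0 1 1 = B * C * z 0 1 1" "z' 2 1 1 = B * C * z 2 1 1"
    "z' 1 0 1 = A * C * z 1 0 1" "z' 1 2 1 = A * C * z 1 2 1"
    "z' 1 1 0 = A * B * z 1 1 0" "z' 1 1 2 = A * B * z 1 1 2"
    by (simp_all add: assms(5) coord_sign_def)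
  then show ?thesis
    using assms(1-4) unfolding Khex_cube_def
    by (elim insertE emptyE) (simp_all add: power_mult_distrib minus_divide_left)
qed

lemma coord_sign_nonzero: "\<forall>i. \<alpha> i \<in> {-1, 1} \<Longrightarrow> coord_sign \<alpha> p \<noteq> (0::'a::ring_1)"
  by (auto simp: coord_sign_def dest: spec[of _ "p div 2"])

lemma sign_twist_nonzero:
  assumes "\<forall>s. inL s \<longrightarrow> x s \<noteq> 0" and "\<forall>i. \<alpha> i \<in> {-1, 1} \<and> \<beta> i \<in> {-1, 1} \<and> \<gamma> i \<in> {-1, 1}"
    and "sign_twist x y \<alpha> \<beta> \<gamma>" and "inL s"
  shows "y s \<noteq> 0"
proof (cases s)
  case (fields p q r)
  then show ?thesis
    using assms sign_twist_coord_sign[OF assms(3), of p q r] coord_sign_nonzero[of \<alpha> p]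
      coord_sign_nonzero[of \<beta> q] coord_sign_nonzero[of \<gamma> r]
    by (auto simp: inL_def)
qed

lemma sign_twist_Khex:
  assumes "Khex x" and signs: "\<forall>i. \<alpha> i \<in> {-1, 1} \<and> \<beta> i \<in> {-1, 1} \<and> \<gamma> i \<in> {-1, 1}"
    and "sign_twist x y \<alpha> \<beta> \<gamma>"
  shows "Khex y"
  unfolding Khex_iff_Khex_cube
proof (intro allI)
  fix a b c :: int
  show "Khex_cube (\<lambda>i j k. y (2*a + i, 2*b + j, 2*c + k))"
  proof (rule Khex_cube_sign_twist)
    show "Khex_cube (\<lambda>i j k. x (2*a + i, 2*b + j, 2*c + k))"
      using assms(1) by (simp add: Khex_iff_Khex_cube)
    show "\<alpha> a \<in> {-1, 1}" "\<beta> b \<in> {-1, 1}" "\<gamma> c \<in> {-1, 1}"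
      using signs by blast+
    show "y (2*a + i, 2*b + j, 2*c + k) = coord_sign (\<lambda>_. \<alpha> a) i * coord_sign (\<lambda>_. \<beta> b) j *
        coord_sign (\<lambda>_. \<gamma> c) k * x (2*a + i, 2*b + j, 2*c + k)"
      if "i \<in> {0, 1, 2}" "j \<in> {0, 1, 2}" "k \<in> {0, 1, 2}" "even (i + j + k)" for i j k
      using sign_twist_coord_sign[OF assms(3), of "2*a + i" "2*b + j" "2*c + k"] that
      by (simp add: coord_sign_cube)
  qed
qed

lemma signed_sum_eq_imp_equal_signs:
  fixes P Q :: "'a::field_char_0"
  assumes "s \<in> {-1, 1}" "t \<in> {-1, 1}" "u \<in> {-1, 1}"
    and "P \<noteq> 0" "Q \<noteq> 0" "P + Q \<noteq> 0" and "t * (P + Q) = s * P + u * Q"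
  shows "s = t \<and> u = t"
proof -
  have "P * 2 + Q * 2 \<noteq> 0"
    using assms(6) by (metis distrib_right mult_eq_0_iff zero_neq_numeral)
  then show ?thesis
    using assms by (auto simp: algebra_simps)
qed

lemma Khex_cube_face_ratio_sign:
  fixes z z' :: "int \<Rightarrow> int \<Rightarrow> int \<Rightarrow> 'a::field"
  assumes "Khex_cube z" "Khex_cube z'" and "\<And>i j k. even i \<Longrightarrow> even j \<Longrightarrow> even k \<Longrightarrow> z' i j k = z i j k"
    and "z 0 1 1 \<noteq> 0"
  shows "z' 0 1 1 / z 0 1 1 \<in> {-1, 1}"
proof -
  have "(z' 0 1 1)^2 = (z 0 1 1)^2"
    using assms(1-3) unfolding Khex_cube_def by simp
  then show ?thesis
    using assms(4) by (auto simp: power2_eq_iff)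
qed

lemma Khex_cube_face_sign_relations:
  fixes z z' :: "int \<Rightarrow> int \<Rightarrow> int \<Rightarrow> 'a::field_char_0"
  assumes "Khex_cube z" "Khex_cube z'" and "\<And>i j k. even i \<Longrightarrow> even j \<Longrightarrow> even k \<Longrightarrow> z' i j k = z i j k"
    and "z' 2 1 1 = t * z 2 1 1" "z' 0 1 1 = u * z 0 1 1" "z' 1 0 1 = v * z 1 0 1" "z' 1 1 0 = w * z 1 1 0"
    and "t \<in> {-1, 1}" "u \<in> {-1, 1}" "v \<in> {-1, 1}" "w \<in> {-1, 1}"
    and "z 2 0 0 \<noteq> 0" "z 2 1 1 \<noteq> 0" "z 0 1 1 \<noteq> 0" "z 1 0 1 \<noteq> 0" "z 1 1 0 \<noteq> 0"
  shows "t = u \<and> u = v * w"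
proof -
  let ?P = "z 1 0 1 * z 1 1 0" and ?Q = "z 0 1 1 * z 2 0 0"
  have "z 0 0 0 \<noteq> 0" and z211: "z 2 1 1 * z 0 0 0 = ?P + ?Q"
    using assms(1) unfolding Khex_cube_def by simp_all
  moreover have "t * z 2 1 1 * z 0 0 0 = (v * w) * ?P + u * ?Q"
    using assms(2-7) \<open>z 0 0 0 \<noteq> 0\<close> unfolding Khex_cube_def by (simp add: field_simps)
  ultimately have "t * (?P + ?Q) = (v * w) * ?P + u * ?Q"
    by (simp add: mult.assoc)
  moreover have "v * w \<in> {-1, 1}"
    using assms(10,11) by auto
  moreover have "?P + ?Q \<noteq> 0"
    using z211 assms(13) \<open>z 0 0 0 \<noteq> 0\<close> by (metis mult_eq_0_iff)
  ultimately show ?thesis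
    using signed_sum_eq_imp_equal_signs[of "v * w" t u ?P ?Q] assms(8,9,12-16) by auto
qed

lemma sign_factorization:
  fixes f :: "'b \<Rightarrow> 'c \<Rightarrow> 'r::comm_ring_1" and g :: "'a \<Rightarrow> 'c \<Rightarrow> 'r" and h :: "'a \<Rightarrow> 'b \<Rightarrow> 'r"
  assumes fgh: "\<And>a b c. f b c = g a c * h a b"
    and g: "\<And>a c. g a c \<in> {-1, 1}" and h: "\<And>a b. h a b \<in> {-1, 1}"
  obtains \<alpha> \<beta> \<gamma> where "\<And>i. \<alpha> i \<in> {-1, 1}" "\<And>i. \<beta> i \<in> {-1, 1}" "\<And>i. \<gamma> i \<in> {-1, 1}"
    and "\<And>b c. f b c = \<beta> b * \<gamma> c" "\<And>a c. g a c = \<alpha> a * \<gamma> c" "\<And>a b. h a b = \<alpha> a * \<beta> b"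
proof -
  fix a\<^sub>0 :: 'a and b\<^sub>0 :: 'b and c\<^sub>0 :: 'c
  have gg: "g a c * g a c = 1" and hh: "h a b * h a b = 1" for a b c
    using g[of a c] h[of a b] by auto
  have rank_one: "g a c * g a c\<^sub>0 = g a\<^sub>0 c * g a\<^sub>0 c\<^sub>0" for a c
  proof -
    have "g a c * g a c\<^sub>0 * (h a b\<^sub>0 * h a b\<^sub>0) = (g a c * h a b\<^sub>0) * (g a c\<^sub>0 * h a b\<^sub>0)"
      by (simp add: ac_simps)
    also have "\<dots> = (g a\<^sub>0 c * h a\<^sub>0 b\<^sub>0) * (g a\<^sub>0 c\<^sub>0 * h a\<^sub>0 b\<^sub>0)"
      by (simp flip: fgh)
    also have "\<dots> = g a\<^sub>0 c * g a\<^sub>0 c\<^sub>0 * (h a\<^sub>0 b\<^sub>0 * h a\<^sub>0 b\<^sub>0)"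
      by (simp add: ac_simps)
    finally show ?thesis
      by (simp add: hh)
  qed
  show ?thesis
  proof
    show "g a c\<^sub>0 * g a\<^sub>0 c\<^sub>0 \<in> {-1, 1}" for a
      using g[of a c\<^sub>0] g[of a\<^sub>0 c\<^sub>0] by auto
    show "h a\<^sub>0 b \<in> {-1, 1}" "g a\<^sub>0 c \<in> {-1, 1}" for b c
      using h g by auto
    fix a b c
    show "f b c = h a\<^sub>0 b * g a\<^sub>0 c"
      by (simp add: fgh[of b c a\<^sub>0] mult.commute)
    have "g a c = (g a c * g a c\<^sub>0) * g a c\<^sub>0"
      by (simp add: gg mult.assoc)
    also have "\<dots> = (g a\<^sub>0 c * g a\<^sub>0 c\<^sub>0) * g a c\<^sub>0"
      by (simp only: rank_one[of a c])
    also have "\<dots> = g a c\<^sub>0 * g a\<^sub>0 c\<^sub>0 * g a\<^sub>0 c"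
      by (simp add: ac_simps)
    finally show "g a c = g a c\<^sub>0 * g a\<^sub>0 c\<^sub>0 * g a\<^sub>0 c" .
    have "h a b = (g a c\<^sub>0 * g a c\<^sub>0) * h a b"
      by (simp add: gg)
    also have "\<dots> = g a c\<^sub>0 * g a\<^sub>0 c\<^sub>0 * h a\<^sub>0 b"
      by (simp add: mult.assoc fgh[of b c\<^sub>0 a, symmetric] fgh[of b c\<^sub>0 a\<^sub>0])
    finally show "h a b = g a c\<^sub>0 * g a\<^sub>0 c\<^sub>0 * h a\<^sub>0 b" .
  qed
qed

locale Khex_same_vertices =
  fixes x y :: "int \<times> int \<times> int \<Rightarrow> complex"
  assumes Khex_x: "Khex x" and Khex_y: "Khex y"
    and x_nonzero: "\<And>s. inL s \<Longrightarrow> x s \<noteq> 0"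
    and same_vertices: "\<And>p q r. even p \<Longrightarrow> even q \<Longrightarrow> even r \<Longrightarrow> y (p, q, r) = x (p, q, r)"
begin

definition ratio :: "int \<times> int \<times> int \<Rightarrow> complex" where
  "ratio s = y s / x s"

lemma y_eq_ratio: "even (p + q + r) \<Longrightarrow> y (p, q, r) = ratio (p, q, r) * x (p, q, r)"
  using x_nonzero[of "(p, q, r)"] by (simp add: ratio_def inL_def)

text \<open>The equations are invariant under cyclic permutation of the coordinates, which reduces
  statements about the three face directions to the direction normal to the first axis.\<close>

lemma rotated: "Khex_same_vertices (x \<circ> rot3) (y \<circ> rot3)"
  by unfold_locales (auto simp: Khex_rot3 Khex_x Khex_y x_nonzero same_vertices)

lemma ratio_rotated: "Khex_same_vertices.ratio (x \<circ> rot3) (y \<circ> rot3) = ratio \<circ> rot3"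
  by (simp add: fun_eq_iff Khex_same_vertices.ratio_def[OF rotated] ratio_def)

lemma Khex_cube_x_y:
  "Khex_cube (\<lambda>i j k. x (2*a + i, 2*b + j, 2*c + k))" "Khex_cube (\<lambda>i j k. y (2*a + i, 2*b + j, 2*c + k))"
  using Khex_x Khex_y by (simp_all add: Khex_iff_Khex_cube)

lemma ratio_sign_011: "ratio (2*a, 2*b + 1, 2*c + 1) \<in> {-1, 1}"
  using Khex_cube_face_ratio_sign[OF Khex_cube_x_y, of a b c a b c] x_nonzero[of "(2*a, 2*b + 1, 2*c + 1)"]
  by (simp add: ratio_def same_vertices inL_def)

lemma ratio_signs:
  "ratio (2*a, 2*b + 1, 2*c + 1) \<in> {-1, 1}"
  "ratio (2*a + 1, 2*b, 2*c + 1) \<in> {-1, 1}"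
  "ratio (2*a + 1, 2*b + 1, 2*c) \<in> {-1, 1}"
  using ratio_sign_011 Khex_same_vertices.ratio_sign_011[OF Khex_same_vertices.rotated[OF rotated], of b c a]
    Khex_same_vertices.ratio_sign_011[OF rotated, of c a b]
  by (simp_all add: ratio_rotated Khex_same_vertices.ratio_rotated[OF rotated])

lemma ratio_cube_011:
  "ratio (2*a + 2, 2*b + 1, 2*c + 1) = ratio (2*a, 2*b + 1, 2*c + 1) \<and>
   ratio (2*a, 2*b + 1, 2*c + 1) = ratio (2*a + 1, 2*b, 2*c + 1) * ratio (2*a + 1, 2*b + 1, 2*c)"
proof (rule Khex_cube_face_sign_relations[OF Khex_cube_x_y])
  show "ratio (2*a + 2, 2*b + 1, 2*c + 1) \<in> {-1, 1}"
    using ratio_signs(1)[of "a + 1" b c] by (simp add: algebra_simps)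
  show "ratio (2*a, 2*b + 1, 2*c + 1) \<in> {-1, 1}" "ratio (2*a + 1, 2*b, 2*c + 1) \<in> {-1, 1}"
    "ratio (2*a + 1, 2*b + 1, 2*c) \<in> {-1, 1}"
    by (rule ratio_signs)+
qed (simp_all add: same_vertices y_eq_ratio x_nonzero inL_def)

lemma ratio_shift_invariant:
  "ratio (2*a + 2, 2*b + 1, 2*c + 1) = ratio (2*a, 2*b + 1, 2*c + 1)"
  "ratio (2*a + 1, 2*b + 2, 2*c + 1) = ratio (2*a + 1, 2*b, 2*c + 1)"
  "ratio (2*a + 1, 2*b + 1, 2*c + 2) = ratio (2*a + 1, 2*b + 1, 2*c)"
  using ratio_cube_011 Khex_same_vertices.ratio_cube_011[OF Khex_same_vertices.rotated[OF rotated], of b c a]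
    Khex_same_vertices.ratio_cube_011[OF rotated, of c a b]
  by (simp_all add: ratio_rotated Khex_same_vertices.ratio_rotated[OF rotated])

lemma exists_sign_twist:
  "\<exists>\<alpha> \<beta> \<gamma>. (\<forall>i. \<alpha> i \<in> {-1, 1} \<and> \<beta> i \<in> {-1, 1} \<and> \<gamma> i \<in> {-1, 1}) \<and> sign_twist x y \<alpha> \<beta> \<gamma>"
proof -
  have const: "F a = F 0" if "\<And>a. F (a + 1) = F a" for F :: "int \<Rightarrow> complex" and a
    using periodic_fun_simple'.of_int[OF periodic_fun_simple'.intro, of F a] that by simp
  define f where "f b c = ratio (0, 2*b + 1, 2*c + 1)" for b c
  define g where "g a c = ratio (2*a + 1, 0, 2*c + 1)" for a c
  define h where "h a b = ratio (2*a + 1, 2*b + 1, 0)" for a b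
  have f: "ratio (2*a, 2*b + 1, 2*c + 1) = f b c" for a b c
    using const[of "\<lambda>a. ratio (2*a, 2*b + 1, 2*c + 1)" a] ratio_shift_invariant(1)
    by (simp add: f_def algebra_simps)
  have g: "ratio (2*a + 1, 2*b, 2*c + 1) = g a c" for a b c
    using const[of "\<lambda>b. ratio (2*a + 1, 2*b, 2*c + 1)" b] ratio_shift_invariant(2)
    by (simp add: g_def algebra_simps)
  have h: "ratio (2*a + 1, 2*b + 1, 2*c) = h a b" for a b c
    using const[of "\<lambda>c. ratio (2*a + 1, 2*b + 1, 2*c)" c] ratio_shift_invariant(3)
    by (simp add: h_def algebra_simps)
  have fgh: "f b c = g a c * h a b" for a b c
    using ratio_cube_011[of a b c] by (simp add: f g h)
  have gh_signs: "g a c \<in> {-1, 1}" "h a b \<in> {-1, 1}" for a b c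
    using ratio_signs(2)[of a 0 c] ratio_signs(3)[of a b 0] by (simp_all add: g_def h_def)
  obtain \<alpha> \<beta> \<gamma> where signs: "\<And>i. \<alpha> i \<in> {-1, 1}" "\<And>i. \<beta> i \<in> {-1, 1}" "\<And>i. \<gamma> i \<in> {-1, 1}"
    and "\<And>b c. f b c = \<beta> b * \<gamma> c" "\<And>a c. g a c = \<alpha> a * \<gamma> c" "\<And>a b. h a b = \<alpha> a * \<beta> b"
    using sign_factorization[of f g h, OF fgh gh_signs] by blast
  then have "sign_twist x y \<alpha> \<beta> \<gamma>"
    by (simp add: sign_twist_def same_vertices y_eq_ratio f g h)
  with signs show ?thesis
    by blast
qed

end

theorem theorem2p23:
  fixes x :: "int \<times> int \<times> int \<Rightarrow> complex"
  assumes nz: "\<forall>s. inL s \<longrightarrow> x s \<noteq> 0"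
    and hx: "Khex x"
  shows "(\<forall>(\<alpha>::int \<Rightarrow> complex) \<beta> \<gamma> y.
            (\<forall>i. \<alpha> i \<in> {-1, 1} \<and> \<beta> i \<in> {-1, 1} \<and> \<gamma> i \<in> {-1, 1}) \<and> sign_twist x y \<alpha> \<beta> \<gamma>
            \<longrightarrow> (\<forall>s. inL s \<longrightarrow> y s \<noteq> 0) \<and> Khex y)
       \<and> (\<forall>y. (\<forall>s. inL s \<longrightarrow> y s \<noteq> 0) \<and> Khex y \<and> (\<forall>a b c. y (2*a, 2*b, 2*c) = x (2*a, 2*b, 2*c))
            \<longrightarrow> (\<exists>\<alpha> \<beta> \<gamma>. (\<forall>i. \<alpha> i \<in> {-1, 1} \<and> \<beta> i \<in> {-1, 1} \<and> \<gamma> i \<in> {-1, 1})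
                         \<and> sign_twist x y \<alpha> \<beta> \<gamma>))"
proof (rule conjI; intro allI impI)
  fix \<alpha> \<beta> \<gamma> :: "int \<Rightarrow> complex" and y
  assume "(\<forall>i. \<alpha> i \<in> {-1, 1} \<and> \<beta> i \<in> {-1, 1} \<and> \<gamma> i \<in> {-1, 1}) \<and> sign_twist x y \<alpha> \<beta> \<gamma>"
  then show "(\<forall>s. inL s \<longrightarrow> y s \<noteq> 0) \<and> Khex y"
    using sign_twist_nonzero[OF nz] sign_twist_Khex[OF hx] by blast
next
  fix y
  assume "(\<forall>s. inL s \<longrightarrow> y s \<noteq> 0) \<and> Khex y \<and> (\<forall>a b c. y (2*a, 2*b, 2*c) = x (2*a, 2*b, 2*c))"
  then interpret Khex_same_vertices x y
    by unfold_locales (auto simp: hx nz elim!: evenE)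
  show "\<exists>\<alpha> \<beta> \<gamma>. (\<forall>i. \<alpha> i \<in> {-1, 1} \<and> \<beta> i \<in> {-1, 1} \<and> \<gamma> i \<in> {-1, 1}) \<and> sign_twist x y \<alpha> \<beta> \<gamma>"
    by (rule exists_sign_twist)
qed

end
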